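(* Let $M(C,\bar\xi,\pi)$ be a Myller configuration with Darboux frame $(\bar\xi,\bar\mu,\bar v)$ and invariants $G,K,T$, $(G,K)\neq(0,0)$ everywhere, and suppose $C$ is a $W_n$-helix with fixed unit axis $\bar l_n$ and constant angle $\varphi$, $\langle\bar W_n,\bar l_n\rangle=\cos\varphi$. Then, for one choice of sign, $$\bar l_n=\mp(\sin\varphi)\bar\xi+\cos\varphi\left(\frac{-K}{\sqrt{G^2+K^2}}\bar\mu+\frac{G}{\sqrt{G^2+K^2}}\bar v\right).$$
   Context: Let $C$ be a smooth curve in $E^3$ parametrized by arclength $s$; primes denote $d/ds$. A Myller configuration $M(C,\bar\xi,\pi)$ consists of a smooth unit vector field $\bar\xi$ along $C$ and a smooth oriented plane field $\pi$ with $\bar\xi\in\pi$; $\bar v$ is the unit normal of $\pi$, $\bar\mu=\bar v\times\bar\xi$, and $\bar\xi'=G\bar\mu+K\bar v$, $\bar\mu'=-G\bar\xi+T\bar v$, $\bar v'=-K\bar\xi-T\bar\mu$. The ND-vector is $W_n=-K\bar\mu+G\bar v$, $\bar W_n=W_n/\|W_n\|$; $C$ is a $W_n$-helix if there are a constant unit vector $\bar l_n$ (axis) and a constant $\varphi$ with $\langle\bar W_n,\bar l_n\rangle=\cos\varphi$ along $C$.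
   Formalization: The derivative of $\bar W_n$ with respect to s is nonzero at every point of C, and the one choice of sign is a single sign for the whole curve. Apart from conventions, each condition added here is assumed in the paper as well or is needed for the statement above to hold. *)

theory Defs
  imports "HOL-Analysis.Analysis"
begin

definition smooth_fun_on :: "real set \<Rightarrow> (real \<Rightarrow> real) \<Rightarrow> bool" where
  "smooth_fun_on S f \<longleftrightarrow> (\<forall>n. \<forall>s\<in>S. ((deriv ^^ n) f) differentiable (at s))"

definition myller_config ::
  "real set \<Rightarrow> (real \<Rightarrow> real^3) \<Rightarrow> (real \<Rightarrow> real^3) \<Rightarrow> (real \<Rightarrow> real^3) \<Rightarrow> (real \<Rightarrow> real^3)
   \<Rightarrow> (real \<Rightarrow> real) \<Rightarrow> (real \<Rightarrow> real) \<Rightarrow> (real \<Rightarrow> real) \<Rightarrow> bool" where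
  "myller_config S C xi mu nu G K T \<longleftrightarrow>
     (\<forall>s\<in>S. C differentiable (at s) \<and> norm (vector_derivative C (at s)) = 1) \<and>
     smooth_fun_on S G \<and> smooth_fun_on S K \<and> smooth_fun_on S T \<and>
     (\<forall>s\<in>S. norm (xi s) = 1 \<and> norm (nu s) = 1 \<and> xi s \<bullet> nu s = 0 \<and>
             mu s = cross3 (nu s) (xi s)) \<and>
     (\<forall>s\<in>S. (xi has_vector_derivative (G s *\<^sub>R mu s + K s *\<^sub>R nu s)) (at s)) \<and>
     (\<forall>s\<in>S. (mu has_vector_derivative (- G s *\<^sub>R xi s + T s *\<^sub>R nu s)) (at s)) \<and>
     (\<forall>s\<in>S. (nu has_vector_derivative (- K s *\<^sub>R xi s - T s *\<^sub>R mu s)) (at s))"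

definition Wn :: "(real \<Rightarrow> real^3) \<Rightarrow> (real \<Rightarrow> real^3) \<Rightarrow> (real \<Rightarrow> real) \<Rightarrow> (real \<Rightarrow> real) \<Rightarrow> real \<Rightarrow> real^3" where
  "Wn mu nu G K s = - K s *\<^sub>R mu s + G s *\<^sub>R nu s"

definition Wn_bar :: "(real \<Rightarrow> real^3) \<Rightarrow> (real \<Rightarrow> real^3) \<Rightarrow> (real \<Rightarrow> real) \<Rightarrow> (real \<Rightarrow> real) \<Rightarrow> real \<Rightarrow> real^3" where
  "Wn_bar mu nu G K s = (1 / norm (Wn mu nu G K s)) *\<^sub>R Wn mu nu G K s"

definition Wn_helix_axis ::
  "real set \<Rightarrow> (real \<Rightarrow> real^3) \<Rightarrow> (real \<Rightarrow> real^3) \<Rightarrow> (real \<Rightarrow> real) \<Rightarrow> (real \<Rightarrow> real) \<Rightarrow> real^3 \<Rightarrow> real \<Rightarrow> bool" where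
  "Wn_helix_axis S mu nu G K l phi \<longleftrightarrow>
     norm l = 1 \<and> (\<forall>s\<in>S. Wn_bar mu nu G K s \<bullet> l = cos phi)"

end

theory Submission
  imports Defs
begin

text \<open>The unit field \<open>u = W\<^sub>n/\<parallel>W\<^sub>n\<parallel>\<close> is orthogonal to \<open>\<xi>\<close> and, since
  \<open>W\<^sub>n = \<xi> \<times> \<xi>'\<close>, also to \<open>\<xi>'\<close>; differentiating \<open>u \<bullet> \<xi> = 0\<close>,
  \<open>u \<bullet> u = 1\<close> and \<open>u \<bullet> l = cos \<phi>\<close> shows that \<open>u'\<close> is orthogonal to \<open>\<xi>\<close>, \<open>u\<close> and
  \<open>l\<close>. As \<open>u' \<noteq> 0\<close>, it spans the normal of the plane of \<open>\<xi>\<close> and \<open>u\<close>, so \<open>l\<close> lies in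
  that plane: \<open>l = (l \<bullet> \<xi>) \<xi> + cos \<phi> u\<close> with \<open>(l \<bullet> \<xi>)\<^sup>2 = sin\<^sup>2 \<phi>\<close>. The
  continuous function \<open>l \<bullet> \<xi>\<close> cannot change sign without vanishing, so it is the
  constant \<open>\<mp>sin \<phi>\<close>.\<close>

lemma orthonormal_cross3:
  fixes x y :: "real^3"
  assumes "norm x = 1" "norm y = 1" "x \<bullet> y = 0"
  shows "cross3 x y \<bullet> cross3 x y = 1" "x \<bullet> cross3 x y = 0" "y \<bullet> cross3 x y = 0"
proof -
  have "(norm (cross3 x y))\<^sup>2 = 1"
    using norm_cross_dot[of x y] assms by simp
  then show "cross3 x y \<bullet> cross3 x y = 1"
    by (simp add: power2_norm_eq_inner)
  show "x \<bullet> cross3 x y = 0" "y \<bullet> cross3 x y = 0"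
    using dot_cross_self[of x y] by (simp_all add: inner_commute)
qed

lemma orthonormal_cross3_expansion:
  fixes x y v :: "real^3"
  assumes "norm x = 1" "norm y = 1" "x \<bullet> y = 0"
  shows "v = (v \<bullet> x) *\<^sub>R x + (v \<bullet> y) *\<^sub>R y + (v \<bullet> cross3 x y) *\<^sub>R cross3 x y"
proof -
  let ?z = "cross3 x y"
  have unit: "x \<bullet> x = 1" "y \<bullet> y = 1" "?z \<bullet> ?z = 1"
    using assms orthonormal_cross3(1)[OF assms] by (simp_all add: norm_eq_1)
  have orth: "x \<bullet> y = 0" "x \<bullet> ?z = 0" "y \<bullet> ?z = 0"
    using assms(3) orthonormal_cross3(2,3)[OF assms] by simp_all
  then have "independent {x, y, ?z}"
    using unit by (intro pairwise_orthogonal_independent) (auto simp: pairwise_def orthogonal_def inner_commute)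
  moreover have "x \<noteq> y" "x \<noteq> ?z" "y \<noteq> ?z"
    using unit orth by auto
  then have "card {x, y, ?z} = 3"
    by simp
  ultimately have spanning: "UNIV \<subseteq> span {x, y, ?z}"
    by (intro card_ge_dim_independent) auto
  define w where "w = v - ((v \<bullet> x) *\<^sub>R x + (v \<bullet> y) *\<^sub>R y + (v \<bullet> ?z) *\<^sub>R ?z)"
  have "orthogonal w b" if "b \<in> {x, y, ?z}" for b
    using that unit orth unfolding w_def orthogonal_def
    by (auto simp: inner_diff_left inner_diff_right inner_add_left inner_add_right inner_commute)
  then have "orthogonal w w"
    using spanning by (meson orthogonal_to_span UNIV_I subsetD)
  then show ?thesis
    by (simp add: w_def orthogonal_def)
qed

lemma orthogonal_to_normal_in_plane:
  fixes x y n l :: "real^3"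
  assumes "norm x = 1" "norm y = 1" "x \<bullet> y = 0"
    and "n \<noteq> 0" "n \<bullet> x = 0" "n \<bullet> y = 0" "n \<bullet> l = 0"
  shows "l = (l \<bullet> x) *\<^sub>R x + (l \<bullet> y) *\<^sub>R y"
proof -
  let ?z = "cross3 x y"
  have "n = (n \<bullet> ?z) *\<^sub>R ?z"
    using orthonormal_cross3_expansion[OF assms(1-3), of n] assms(5,6) by simp
  then have "(n \<bullet> ?z) * (?z \<bullet> l) = 0" "n \<bullet> ?z \<noteq> 0"
    using assms(4,7) by (metis inner_scaleR_left, metis scale_eq_0_iff)
  then have "l \<bullet> ?z = 0"
    by (simp add: inner_commute)
  then show ?thesis
    using orthonormal_cross3_expansion[OF assms(1-3), of l] by simp
qed

lemma has_vector_derivative_locally_const_eq_0: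
  fixes f :: "real \<Rightarrow> 'a::real_normed_vector"
  assumes "(f has_vector_derivative f') (at s)" "open S" "s \<in> S" "\<And>t. t \<in> S \<Longrightarrow> f t = c"
  shows "f' = 0"
proof -
  have "((\<lambda>t. c) has_vector_derivative 0) (at s)"
    by (rule has_vector_derivative_const)
  then have "(f has_vector_derivative 0) (at s)"
    by (rule has_vector_derivative_transform_within_open[OF _ assms(2,3)]) (simp add: assms(4))
  then show ?thesis
    using assms(1) vector_derivative_unique_at by blast
qed

lemma inner_derivative_locally_const_eq_0:
  fixes f g :: "real \<Rightarrow> 'a::real_inner"
  assumes "(f has_vector_derivative f') (at s)" "(g has_vector_derivative g') (at s)"
    and "open S" "s \<in> S" "\<And>t. t \<in> S \<Longrightarrow> f t \<bullet> g t = c"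
  shows "f s \<bullet> g' + f' \<bullet> g s = 0"
  using bounded_bilinear.has_vector_derivative[OF bounded_bilinear_inner assms(1,2)] assms(3-5)
  by (rule has_vector_derivative_locally_const_eq_0)

lemma connected_continuous_square_const:
  fixes f :: "real \<Rightarrow> real"
  assumes "connected S" "continuous_on S f" "\<And>s. s \<in> S \<Longrightarrow> (f s)\<^sup>2 = c\<^sup>2" "s0 \<in> S" "s \<in> S"
  shows "f s = f s0"
proof (rule ccontr)
  assume "f s \<noteq> f s0"
  then have opposite: "f s = - f s0" "f s0 \<noteq> 0"
    using assms(3)[OF assms(4)] assms(3)[OF assms(5)] by (auto simp: power2_eq_iff)
  have "connected (f ` S)"
    using assms(2,1) by (rule connected_continuous_image)
  then have "{min (f s) (f s0) .. max (f s) (f s0)} \<subseteq> f ` S"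
    using assms(4,5) by (intro connected_contains_Icc) (auto simp: min_def max_def)
  moreover have "0 \<in> {min (f s) (f s0) .. max (f s) (f s0)}"
    using opposite by auto
  ultimately have "0 \<in> f ` S"
    by blast
  then obtain t where "t \<in> S" "f t = 0"
    by (metis imageE)
  then have "(f s0)\<^sup>2 = 0"
    using assms(3)[of t] assms(3)[OF assms(4)] by simp
  then show False
    using opposite by simp
qed

lemma myller_config_frame:
  assumes "myller_config S C xi mu nu G K T" "s \<in> S"
  shows "xi s \<bullet> xi s = 1" "mu s \<bullet> mu s = 1" "nu s \<bullet> nu s = 1"
    "xi s \<bullet> mu s = 0" "xi s \<bullet> nu s = 0" "mu s \<bullet> nu s = 0"
proof -
  have unit: "norm (nu s) = 1" "norm (xi s) = 1" and orth: "xi s \<bullet> nu s = 0"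
    and mu: "mu s = cross3 (nu s) (xi s)"
    using assms unfolding myller_config_def by auto
  then have "nu s \<bullet> xi s = 0"
    by (simp add: inner_commute)
  note cross = orthonormal_cross3[OF unit this]
  show "xi s \<bullet> xi s = 1" "nu s \<bullet> nu s = 1" "xi s \<bullet> nu s = 0"
    using unit orth by (simp_all add: norm_eq_1)
  show "mu s \<bullet> mu s = 1" "xi s \<bullet> mu s = 0" "mu s \<bullet> nu s = 0"
    unfolding mu using cross by (simp_all add: inner_commute)
qed

lemma smooth_fun_on_differentiable:
  assumes "smooth_fun_on S f" "s \<in> S"
  shows "f differentiable (at s)"
  using assms unfolding smooth_fun_on_def by (metis funpow_0)

lemma norm_Wn:
  assumes "myller_config S C xi mu nu G K T" "s \<in> S"
  shows "norm (Wn mu nu G K s) = sqrt ((G s)\<^sup>2 + (K s)\<^sup>2)"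
proof -
  have "(norm (Wn mu nu G K s))\<^sup>2 = (G s)\<^sup>2 + (K s)\<^sup>2"
    using myller_config_frame[OF assms] unfolding Wn_def power2_norm_eq_inner
    by (simp add: inner_diff_left inner_diff_right inner_commute power2_eq_square)
  then show ?thesis
    by (metis norm_ge_zero real_sqrt_unique)
qed

lemma Wn_bar_eq:
  assumes "myller_config S C xi mu nu G K T" "s \<in> S"
  shows "Wn_bar mu nu G K s
           = (- K s / sqrt ((G s)\<^sup>2 + (K s)\<^sup>2)) *\<^sub>R mu s
             + (G s / sqrt ((G s)\<^sup>2 + (K s)\<^sup>2)) *\<^sub>R nu s"
  unfolding Wn_bar_def norm_Wn[OF assms] unfolding Wn_def by (simp add: algebra_simps)

lemma Wn_bar_unit:
  assumes "myller_config S C xi mu nu G K T" "s \<in> S" "(G s, K s) \<noteq> (0, 0)"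
  shows "norm (Wn_bar mu nu G K s) = 1"
proof -
  have "Wn mu nu G K s \<noteq> 0"
    using norm_Wn[OF assms(1,2)] assms(3) by auto
  then show ?thesis
    unfolding Wn_bar_def by simp
qed

lemma Wn_bar_orthogonal_xi:
  assumes "myller_config S C xi mu nu G K T" "s \<in> S"
  shows "Wn_bar mu nu G K s \<bullet> xi s = 0"
    and "Wn_bar mu nu G K s \<bullet> (G s *\<^sub>R mu s + K s *\<^sub>R nu s) = 0"
  using myller_config_frame[OF assms] unfolding Wn_bar_def Wn_def
  by (simp_all add: inner_add_right inner_diff_left inner_diff_right inner_commute)

lemma Wn_bar_differentiable:
  assumes "myller_config S C xi mu nu G K T" "s \<in> S" "(G s, K s) \<noteq> (0, 0)"
  shows "Wn_bar mu nu G K differentiable (at s)"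
proof -
  have "G differentiable (at s)" "K differentiable (at s)"
    using assms(1,2) smooth_fun_on_differentiable unfolding myller_config_def by blast+
  moreover have "mu differentiable (at s)" "nu differentiable (at s)"
    using assms(1,2) unfolding myller_config_def by (meson differentiableI_vector)+
  ultimately have W: "Wn mu nu G K differentiable (at s)"
    unfolding Wn_def[abs_def] by (intro derivative_intros) auto
  have "Wn mu nu G K s \<noteq> 0"
    using norm_Wn[OF assms(1,2)] assms(3) by auto
  then have "(\<lambda>t. norm (Wn mu nu G K t)) differentiable (at s)"
    using W by (rule differentiable_compose[OF differentiable_norm_at])
  then show ?thesis
    unfolding Wn_bar_def[abs_def] using W \<open>Wn mu nu G K s \<noteq> 0\<close>
    by (intro derivative_intros) auto
qed

lemma Wn_helix_axis_in_plane:
  assumes M: "myller_config S C xi mu nu G K T" and "open S" "s \<in> S"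
    and GK: "\<forall>t\<in>S. (G t, K t) \<noteq> (0, 0)"
    and helix: "Wn_helix_axis S mu nu G K l phi"
    and D_nonzero: "vector_derivative (Wn_bar mu nu G K) (at s) \<noteq> 0"
  shows "l = (l \<bullet> xi s) *\<^sub>R xi s + cos phi *\<^sub>R Wn_bar mu nu G K s"
    and "(l \<bullet> xi s)\<^sup>2 = (sin phi)\<^sup>2"
proof -
  let ?u = "Wn_bar mu nu G K"
  define D where "D = vector_derivative ?u (at s)"
  have du: "(?u has_vector_derivative D) (at s)"
    unfolding D_def using Wn_bar_differentiable[OF M \<open>s \<in> S\<close>] GK \<open>s \<in> S\<close>
    by (simp add: vector_derivative_works)
  have dxi: "(xi has_vector_derivative (G s *\<^sub>R mu s + K s *\<^sub>R nu s)) (at s)"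
    using M \<open>s \<in> S\<close> unfolding myller_config_def by blast
  have unit: "norm (xi s) = 1" "norm (?u s) = 1" "xi s \<bullet> ?u s = 0"
    using M \<open>s \<in> S\<close> GK Wn_bar_unit Wn_bar_orthogonal_xi(1)
    by (auto simp: myller_config_def inner_commute)
  have ul: "?u t \<bullet> l = cos phi" if "t \<in> S" for t
    using helix that unfolding Wn_helix_axis_def by blast
  have "?u s \<bullet> 0 + D \<bullet> l = 0"
    using du has_vector_derivative_const \<open>open S\<close> \<open>s \<in> S\<close> ul
    by (rule inner_derivative_locally_const_eq_0)
  moreover have "?u s \<bullet> D + D \<bullet> ?u s = 0"
    using du du \<open>open S\<close> \<open>s \<in> S\<close>
    by (rule inner_derivative_locally_const_eq_0[where c = 1])
       (use M GK Wn_bar_unit in \<open>auto simp: norm_eq_1\<close>)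
  moreover have "?u s \<bullet> (G s *\<^sub>R mu s + K s *\<^sub>R nu s) + D \<bullet> xi s = 0"
    using du dxi \<open>open S\<close> \<open>s \<in> S\<close>
    by (rule inner_derivative_locally_const_eq_0[where c = 0])
       (use M Wn_bar_orthogonal_xi(1) in auto)
  ultimately have "D \<bullet> l = 0" "D \<bullet> ?u s = 0" "D \<bullet> xi s = 0"
    using Wn_bar_orthogonal_xi(2)[OF M \<open>s \<in> S\<close>] by (simp_all add: inner_commute)
  then have "l = (l \<bullet> xi s) *\<^sub>R xi s + (l \<bullet> ?u s) *\<^sub>R ?u s"
    using unit D_nonzero unfolding D_def by (intro orthogonal_to_normal_in_plane) auto
  then show l: "l = (l \<bullet> xi s) *\<^sub>R xi s + cos phi *\<^sub>R ?u s"
    using ul[OF \<open>s \<in> S\<close>] by (simp add: inner_commute)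
  have "1 = l \<bullet> l"
    using helix unfolding Wn_helix_axis_def by (simp add: norm_eq_1)
  also have "\<dots> = (l \<bullet> xi s)\<^sup>2 + (cos phi)\<^sup>2"
    using unit by (subst (1 2) l)
      (simp add: norm_eq_1 inner_add_left inner_add_right inner_commute power2_eq_square)
  finally show "(l \<bullet> xi s)\<^sup>2 = (sin phi)\<^sup>2"
    by (simp add: sin_squared_eq)
qed

theorem corollary15:
  fixes a b :: real and C xi mu nu :: "real \<Rightarrow> real^3" and G K T :: "real \<Rightarrow> real"
    and l :: "real^3" and phi :: real
  assumes "a < b"
    and "myller_config {a<..<b} C xi mu nu G K T"
    and "\<forall>s\<in>{a<..<b}. (G s, K s) \<noteq> (0, 0)"
    and "Wn_helix_axis {a<..<b} mu nu G K l phi"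
    and "\<forall>s\<in>{a<..<b}. vector_derivative (Wn_bar mu nu G K) (at s) \<noteq> 0"
  shows "\<exists>e\<in>{1, -1::real}. \<forall>s\<in>{a<..<b}.
           l = (- e * sin phi) *\<^sub>R xi s
               + cos phi *\<^sub>R ((- K s / sqrt ((G s)\<^sup>2 + (K s)\<^sup>2)) *\<^sub>R mu s
                              + (G s / sqrt ((G s)\<^sup>2 + (K s)\<^sup>2)) *\<^sub>R nu s)"
proof -
  let ?S = "{a<..<b}" and ?x = "\<lambda>s. l \<bullet> xi s"
  have axis: "l = ?x s *\<^sub>R xi s + cos phi *\<^sub>R Wn_bar mu nu G K s" "(?x s)\<^sup>2 = (sin phi)\<^sup>2"
    if "s \<in> ?S" for s
    using Wn_helix_axis_in_plane[OF assms(2) _ that assms(3,4)] assms(5) that by auto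
  have "continuous_on ?S xi"
    using assms(2) unfolding myller_config_def
    by (meson continuous_at_imp_continuous_on has_vector_derivative_continuous)
  then have "continuous_on ?S ?x"
    by (intro continuous_intros)
  obtain s0 where s0: "s0 \<in> ?S"
    using assms(1) by (meson dense greaterThanLessThan_iff)
  then have const: "?x s = ?x s0" if "s \<in> ?S" for s
    using connected_continuous_square_const[OF connected_Ioo \<open>continuous_on ?S ?x\<close> axis(2)] that
    by blast
  obtain e where "e \<in> {1, -1::real}" "?x s0 = - e * sin phi"
  proof -
    have "?x s0 = sin phi \<or> ?x s0 = - sin phi"
      using axis(2)[OF s0] by (simp add: power2_eq_iff)
    then show thesis
      using that[of "-1"] that[of 1] by auto
  qed
  then show ?thesis
    using axis(1) const Wn_bar_eq[OF assms(2)] by (intro bexI[of _ e]) auto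
qed

end
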